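(* Let $n\ge 1$ and $\alpha\in[n-1,n]$. Let $\Omega\subset\mathbb{R}^n$ be a bounded measurable set with $|\Omega|>0$ whose topological boundary satisfies $$0<M_2\le \underline{\mathcal{M}}^{\alpha}(\partial\Omega)\le \overline{\mathcal{M}}^{\alpha}(\partial\Omega)\le M_1<\infty$$ for some constants $M_1,M_2>0$. Assume there is a constant $D_{\partial\Omega}>0$ such that for all $x\in\partial\Omega$ and all $t\in(0,1)$, $$\min\{|B(x,t)\cap\Omega|,\ |B(x,t)\cap\Omega^c|\}\ge D_{\partial\Omega}\, t^n .$$ Let $J\ge 0$ be a function in $L^1(\mathbb{R}^n)$ with $\int_{\mathbb{R}^n}J(z)|z|^n\,dz<\infty$, and let $C_J>0$ be a constant with $\int_{\mathbb{R}^n}J(z)|z|^{\gamma}\,dz\le C_J$ for all $\gamma\in[0,n]$. Assume further that there are constants $c_J,a_J>0$ with $J(z)\ge c_J$ whenever $|z|\le a_J$. Define, for $t>0$, $$\mathcal{J}_t(\Omega)=\int_{\Omega}\int_{\Omega^c}J\Big(\frac{x-y}{t}\Big)\,dx\,dy .$$ Then there is a constant $O_1$ depending only on $n$ and $C_J$, and a constant $O_2>0$ depending only on $n,a_J,c_J,D_{\partial\Omega}$, such that $$0<O_2 M_2\le \liminf_{t\to0^+}\frac{\mathcal{J}_t(\Omega)}{t^{2n-\alpha}}\le \limsup_{t\to0^+}\frac{\mathcal{J}_t(\Omega)}{t^{2n-\alpha}}\le O_1M_1<\infty .$$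
   Context: $|A|$ denotes Lebesgue measure, $\Omega^c=\mathbb{R}^n\setminus\Omega$, $B(x,t)$ is the open ball. For a bounded set $A\subset\mathbb{R}^n$, $B(A,t)=\{x:\mathrm{dist}(x,A)<t\}$, and the $\alpha$-dimensional upper and lower Minkowski contents are $\overline{\mathcal{M}}^{\alpha}(A)=\limsup_{t\to0^+}|B(A,t)|/t^{n-\alpha}$ and $\underline{\mathcal{M}}^{\alpha}(A)=\liminf_{t\to0^+}|B(A,t)|/t^{n-\alpha}$. *)

theory Defs
  imports "HOL-Analysis.Analysis"
begin

definition nbhd :: "'a::euclidean_space set \<Rightarrow> real \<Rightarrow> 'a set" where
  "nbhd A t = {x. \<exists>a\<in>A. dist x a < t}"

definition upper_minkowski :: "real \<Rightarrow> 'a::euclidean_space set \<Rightarrow> ereal" where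
  "upper_minkowski \<alpha> A =
     Limsup (at_right 0) (\<lambda>t. ereal (measure lebesgue (nbhd A t) / t powr (real DIM('a) - \<alpha>)))"

definition lower_minkowski :: "real \<Rightarrow> 'a::euclidean_space set \<Rightarrow> ereal" where
  "lower_minkowski \<alpha> A =
     Liminf (at_right 0) (\<lambda>t. ereal (measure lebesgue (nbhd A t) / t powr (real DIM('a) - \<alpha>)))"

definition nonlocal_J :: "('a::euclidean_space \<Rightarrow> real) \<Rightarrow> 'a set \<Rightarrow> real \<Rightarrow> real" where
  "nonlocal_J J \<Omega> t =
     (LINT y:\<Omega>|lebesgue. (LINT x:(- \<Omega>)|lebesgue. J ((1 / t) *\<^sub>R (x - y))))"

end

theory Submission
  imports Defs
begin

text \<open>
  Substituting \<open>x = y + t z\<close> and applying Tonelli's theorem gives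
  \<open>J\<^sub>t(\<Omega>) = t\<^sup>n \<integral> J(z) e(t z) dz\<close>, where \<open>e(w) = |{y \<in> \<Omega>. y + w \<notin> \<Omega>}|\<close> is the measure
  of the part of \<open>\<Omega>\<close> that the shift by \<open>w\<close> moves out of \<open>\<Omega>\<close>.

  Upper bound: the segment from a point of \<open>\<Omega>\<close> to its shift outside \<open>\<Omega>\<close> crosses \<open>\<partial>\<Omega>\<close>, so
  \<open>e(w) \<le> |B(\<partial>\<Omega>, 2|w|)|\<close>, which the upper Minkowski content bounds by \<open>M (2|w|)\<^bsup>n-\<alpha>\<^esup>\<close> for small
  \<open>|w|\<close>; for larger shifts \<open>e(w) \<le> |\<Omega>|\<close> and only the tail of the moment \<open>\<integral> J(z)|z|\<^bsup>n-\<alpha>\<^esup> dz\<close>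
  contributes, which vanishes as \<open>t \<rightarrow> 0\<close>.

  Lower bound: if \<open>y\<close> lies within \<open>a t/2\<close> of \<open>\<partial>\<Omega>\<close>, the density condition at a nearby boundary point
  yields a set of measure \<open>\<ge> D (a/2)\<^sup>n\<close> of \<open>z \<in> B(0, a)\<close> for which \<open>y\<close> and \<open>y + t z\<close> lie on
  different sides of \<open>\<Omega>\<close>.  Leaving and entering \<open>\<Omega>\<close> have the same measure, so integrating over
  \<open>y\<close> and using \<open>J \<ge> c\<close> on \<open>B(0, a)\<close> gives \<open>J\<^sub>t(\<Omega>) \<ge> c D (a/2)\<^sup>n t\<^sup>n |B(\<partial>\<Omega>, a t/2)| / 2\<close>,
  and the lower Minkowski content finishes the proof.
\<close>

section \<open>Lebesgue measure under affine maps\<close>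

lemma measurable_lebesgue_imp_borel[measurable (raw)]:
  "f \<in> M \<rightarrow>\<^sub>M (lebesgue :: 'a::euclidean_space measure) \<Longrightarrow> f \<in> borel_measurable M"
  by (erule measurable_compose) (rule measurable_completion, simp)

lemma lebesgue_measurable_affine[measurable]:
  "(\<lambda>x::'a::euclidean_space. a + c *\<^sub>R x) \<in> lebesgue \<rightarrow>\<^sub>M lebesgue"
proof (cases "c = 0")
  case False
  have "(\<lambda>x. a + (\<Sum>j\<in>Basis. (c * (x \<bullet> j)) *\<^sub>R j)) = (\<lambda>x::'a. a + c *\<^sub>R x)"
    unfolding scaleR_scaleR[symmetric] scaleR_sum_right[symmetric] euclidean_representation ..
  with False show ?thesis
    using lebesgue_affine_measurable[of "\<lambda>_. c" a] by simp
qed simp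

lemma lebesgue_measurable_translation[measurable]:
  "(\<lambda>x::'a::euclidean_space. x + a) \<in> lebesgue \<rightarrow>\<^sub>M lebesgue"
  using lebesgue_measurable_affine[of a 1] by (simp add: add.commute)

lemma sets_lebesgue_affine_vimage[measurable]:
  "S \<in> sets lebesgue \<Longrightarrow> {x::'a::euclidean_space. a + c *\<^sub>R x \<in> S} \<in> sets lebesgue"
  using measurable_sets[OF lebesgue_measurable_affine] by (simp add: vimage_def)

lemma sets_lebesgue_translation_vimage[measurable]:
  "S \<in> sets lebesgue \<Longrightarrow> {x::'a::euclidean_space. x + a \<in> S} \<in> sets lebesgue"
  using measurable_sets[OF lebesgue_measurable_translation] by (simp add: vimage_def)

lemma sets_lebesgue_Compl[measurable]:
  "S \<in> sets lebesgue \<Longrightarrow> - S \<in> sets (lebesgue :: 'a::euclidean_space measure)"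
  using sets.compl_sets[of S lebesgue] by (simp add: Compl_eq_Diff_UNIV)

lemma sets_lebesgue_cball[measurable]: "cball (a::'a::euclidean_space) r \<in> sets lebesgue"
  by (rule fmeasurableD[OF lmeasurable_cball])

lemma nn_integral_lebesgue_affine:
  fixes f :: "'a::euclidean_space \<Rightarrow> ennreal"
  assumes [measurable]: "f \<in> borel_measurable lebesgue" and c: "c \<noteq> 0"
  shows "(\<integral>\<^sup>+x. f x \<partial>lebesgue) = ennreal (\<bar>c\<bar> ^ DIM('a)) * (\<integral>\<^sup>+x. f (a + c *\<^sub>R x) \<partial>lebesgue)"
proof -
  have lebesgue_eq: "lebesgue = density (distr lebesgue lebesgue (\<lambda>x. a + c *\<^sub>R x)) (\<lambda>_. \<bar>c\<bar> ^ DIM('a))"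
    using lebesgue_affine_euclidean[of "\<lambda>_. c" a] c
    unfolding scaleR_scaleR[symmetric] scaleR_sum_right[symmetric] euclidean_representation
    by simp
  show ?thesis
    by (subst lebesgue_eq) (simp add: nn_integral_density nn_integral_distr nn_integral_cmult)
qed

lemma emeasure_lebesgue_affine_vimage:
  fixes S :: "'a::euclidean_space set"
  assumes [measurable]: "S \<in> sets lebesgue" and "c \<noteq> 0"
  shows "emeasure lebesgue S = ennreal (\<bar>c\<bar> ^ DIM('a)) * emeasure lebesgue {x. a + c *\<^sub>R x \<in> S}"
  using nn_integral_lebesgue_affine[of "indicator S" c a] assms
  by (simp add: indicator_vimage[of "\<lambda>x. a + c *\<^sub>R x", symmetric] vimage_def)

lemma AE_lebesgue_affine:
  fixes P :: "'a::euclidean_space \<Rightarrow> bool"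
  assumes "AE x in lebesgue. P x" and c: "c \<noteq> 0"
  shows "AE x in lebesgue. P (a + c *\<^sub>R x)"
proof -
  obtain N where N: "{x. \<not> P x} \<subseteq> N" "emeasure lebesgue N = 0" "N \<in> sets lebesgue"
    using assms(1) by (rule AE_E) auto
  have "emeasure lebesgue {x. a + c *\<^sub>R x \<in> N} = 0"
    using emeasure_lebesgue_affine_vimage[of N c a] N c by simp
  then have "{x. a + c *\<^sub>R x \<in> N} \<in> null_sets lebesgue"
    by (rule null_setsI) (use N(3) in measurable)
  then show ?thesis
    by (rule AE_I') (use N in auto)
qed

lemma AE_lebesgue_translation:
  fixes P :: "'a::euclidean_space \<Rightarrow> bool"
  shows "AE x in lebesgue. P x \<Longrightarrow> AE x in lebesgue. P (x + a)"
  using AE_lebesgue_affine[of P 1 a] by (simp add: add.commute)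

lemma set_lebesgue_integral_affine_substitution:
  fixes S :: "'a::euclidean_space set" and J :: "'a \<Rightarrow> real"
  assumes [measurable]: "S \<in> sets lebesgue" "J \<in> borel_measurable lebesgue"
    and J_nonneg: "\<And>z. 0 \<le> J z" and t: "t > 0"
  shows "(LINT x:S|lebesgue. J ((1 / t) *\<^sub>R (x - y))) =
    t ^ DIM('a) * enn2real (\<integral>\<^sup>+z. ennreal (J z) * indicator S (y + t *\<^sub>R z) \<partial>lebesgue)"
proof -
  have "(\<lambda>x. J (- ((1 / t) *\<^sub>R y) + (1 / t) *\<^sub>R x)) \<in> borel_measurable lebesgue"
    by measurable
  then have [measurable]: "(\<lambda>x. J ((1 / t) *\<^sub>R (x - y))) \<in> borel_measurable lebesgue"
    by (simp add: scaleR_diff_right)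
  have "(LINT x:S|lebesgue. J ((1 / t) *\<^sub>R (x - y))) =
      enn2real (\<integral>\<^sup>+x. ennreal (indicator S x * J ((1 / t) *\<^sub>R (x - y))) \<partial>lebesgue)"
    unfolding set_lebesgue_integral_def real_scaleR_def using J_nonneg
    by (intro integral_eq_nn_integral) auto
  also have "(\<integral>\<^sup>+x. ennreal (indicator S x * J ((1 / t) *\<^sub>R (x - y))) \<partial>lebesgue) =
      ennreal (t ^ DIM('a)) * (\<integral>\<^sup>+z. ennreal (J z) * indicator S (y + t *\<^sub>R z) \<partial>lebesgue)"
    using t by (subst nn_integral_lebesgue_affine[where a = y and c = t])
      (auto simp: ennreal_mult'' ennreal_indicator mult.commute intro!: arg_cong2[where f = "(*)"] nn_integral_cong)
  finally show ?thesis
    using t by (simp add: enn2real_mult)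
qed

section \<open>Tonelli's theorem for translated indicators\<close>

lemma lebesgue_set_AE_eq_borel:
  assumes "S \<in> sets lebesgue"
  obtains B where "B \<in> sets borel" "AE x in lebesgue. x \<in> S \<longleftrightarrow> x \<in> B"
proof
  show "main_part lborel S \<in> sets borel"
    using assms by (metis main_part_sets sets_lborel)
  show "AE x in lebesgue. x \<in> S \<longleftrightarrow> x \<in> main_part lborel S"
    using AE_in_main_part[of S lborel] assms by (auto intro: AE_completion)
qed

lemma sigma_finite_lebesgue: "sigma_finite_measure (lebesgue :: 'a::euclidean_space measure)"
proof -
  obtain A :: "'a set set" where "countable A" "A \<subseteq> sets lborel" "\<Union>A = space lborel"
    "\<forall>a\<in>A. emeasure lborel a \<noteq> \<infinity>"
    using sigma_finite_lborel unfolding sigma_finite_measure_def by blast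
  then show ?thesis
    unfolding sigma_finite_measure_def by (intro exI[of _ A]) (auto simp: subset_eq)
qed

interpretation lebesgue: sigma_finite_measure "lebesgue :: 'a::euclidean_space measure"
  by (rule sigma_finite_lebesgue)

interpretation lebesgue_pair: pair_sigma_finite "lebesgue :: 'a::euclidean_space measure" "lebesgue :: 'a measure" ..

text \<open>
  The product of two Lebesgue \<open>\<sigma>\<close>-algebras is not complete, so \<open>(y, z) \<mapsto> indicator S (y + t z)\<close>
  is only known to be measurable on it for Borel \<open>S\<close>; Lebesgue sets are first replaced by Borel sets
  that agree with them almost everywhere.
\<close>

lemma nn_integral_indicator_affine_AE_cong:
  fixes S S' :: "'a::euclidean_space set"
  assumes "AE x in lebesgue. x \<in> S \<longleftrightarrow> x \<in> S'" and "t \<noteq> 0"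
  shows "(\<integral>\<^sup>+z. g z * indicator S (y + t *\<^sub>R z) \<partial>lebesgue) =
    (\<integral>\<^sup>+z. g z * indicator S' (y + t *\<^sub>R z) \<partial>lebesgue)"
  using AE_lebesgue_affine[OF assms, of y]
  by (intro nn_integral_cong_AE) (auto simp: indicator_def elim!: eventually_mono)

lemma borel_measurable_nn_integral_indicator_affine:
  fixes S :: "'a::euclidean_space set"
  assumes "S \<in> sets lebesgue" and [measurable]: "g \<in> borel_measurable lebesgue" and "t \<noteq> 0"
  shows "(\<lambda>y. \<integral>\<^sup>+z. g z * indicator S (y + t *\<^sub>R z) \<partial>lebesgue) \<in> borel_measurable lebesgue"
proof -
  obtain B where [measurable]: "B \<in> sets borel" and SB: "AE x in lebesgue. x \<in> S \<longleftrightarrow> x \<in> B"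
    using lebesgue_set_AE_eq_borel[OF assms(1)] by blast
  have "(\<lambda>p. g (snd p) * indicator B (fst p + t *\<^sub>R snd p)) \<in> borel_measurable (lebesgue \<Otimes>\<^sub>M lebesgue)"
    by measurable
  from lebesgue.borel_measurable_nn_integral_fst[OF this] show ?thesis
    by (simp add: nn_integral_indicator_affine_AE_cong[OF SB \<open>t \<noteq> 0\<close>])
qed

lemma nn_integral_indicator_affine_Fubini:
  fixes A S :: "'a::euclidean_space set"
  assumes A[measurable]: "A \<in> sets lebesgue" and S[measurable]: "S \<in> sets lebesgue"
    and [measurable]: "g \<in> borel_measurable lebesgue" and t: "t \<noteq> 0"
  shows "(\<integral>\<^sup>+y. indicator A y * (\<integral>\<^sup>+z. g z * indicator S (y + t *\<^sub>R z) \<partial>lebesgue) \<partial>lebesgue) =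
    (\<integral>\<^sup>+z. g z * emeasure lebesgue (A \<inter> {y. y + t *\<^sub>R z \<in> S}) \<partial>lebesgue)"
proof -
  obtain A' where [measurable]: "A' \<in> sets borel" and AA': "AE x in lebesgue. x \<in> A \<longleftrightarrow> x \<in> A'"
    using lebesgue_set_AE_eq_borel[OF A] by blast
  obtain S' where [measurable]: "S' \<in> sets borel" and SS': "AE x in lebesgue. x \<in> S \<longleftrightarrow> x \<in> S'"
    using lebesgue_set_AE_eq_borel[OF S] by blast
  define F where "F p = indicator A' (fst p) * g (snd p) * indicator S' (fst p + t *\<^sub>R snd p)" for p
  have [measurable]: "F \<in> borel_measurable (lebesgue \<Otimes>\<^sub>M lebesgue)"
    unfolding F_def by measurable
  have "(\<integral>\<^sup>+y. indicator A y * (\<integral>\<^sup>+z. g z * indicator S (y + t *\<^sub>R z) \<partial>lebesgue) \<partial>lebesgue) =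
      (\<integral>\<^sup>+y. \<integral>\<^sup>+z. F (y, z) \<partial>lebesgue \<partial>lebesgue)"
  proof (rule nn_integral_cong_AE)
    show "AE y in lebesgue. indicator A y * (\<integral>\<^sup>+z. g z * indicator S (y + t *\<^sub>R z) \<partial>lebesgue) =
        (\<integral>\<^sup>+z. F (y, z) \<partial>lebesgue)"
      using AA' unfolding nn_integral_indicator_affine_AE_cong[OF SS' t]
      by eventually_elim (simp add: F_def nn_integral_cmult[symmetric] indicator_def mult.assoc)
  qed
  also have "\<dots> = (\<integral>\<^sup>+z. \<integral>\<^sup>+y. F (y, z) \<partial>lebesgue \<partial>lebesgue)"
    by (rule lebesgue_pair.Fubini[symmetric]) measurable
  also have "\<dots> = (\<integral>\<^sup>+z. g z * emeasure lebesgue (A \<inter> {y. y + t *\<^sub>R z \<in> S}) \<partial>lebesgue)"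
  proof (rule nn_integral_cong)
    fix z
    have [measurable]: "A' \<inter> {y. y + t *\<^sub>R z \<in> S'} \<in> sets lebesgue"
      by measurable
    have [measurable]: "A \<inter> {y. y + t *\<^sub>R z \<in> S} \<in> sets lebesgue"
      by measurable
    have "(\<integral>\<^sup>+y. F (y, z) \<partial>lebesgue) = g z * emeasure lebesgue (A' \<inter> {y. y + t *\<^sub>R z \<in> S'})"
      by (subst nn_integral_cmult_indicator[symmetric]) (auto intro!: nn_integral_cong simp: F_def indicator_def)
    also have "emeasure lebesgue (A' \<inter> {y. y + t *\<^sub>R z \<in> S'}) = emeasure lebesgue (A \<inter> {y. y + t *\<^sub>R z \<in> S})"
    proof (rule emeasure_eq_AE)
      show "AE y in lebesgue. y \<in> A' \<inter> {y. y + t *\<^sub>R z \<in> S'} \<longleftrightarrow> y \<in> A \<inter> {y. y + t *\<^sub>R z \<in> S}"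
        using AA' AE_lebesgue_translation[OF SS', of "t *\<^sub>R z"]
        by eventually_elim blast
    qed simp_all
    finally show "(\<integral>\<^sup>+y. F (y, z) \<partial>lebesgue) = g z * emeasure lebesgue (A \<inter> {y. y + t *\<^sub>R z \<in> S})" .
  qed
  finally show ?thesis .
qed

section \<open>Boundary neighbourhoods and the escape measure\<close>

lemma open_nbhd: "open (nbhd A r)"
proof -
  have "nbhd A r = (\<Union>a\<in>A. ball a r)"
    by (auto simp: nbhd_def dist_commute)
  then show ?thesis
    by (simp add: open_UN)
qed

lemma sets_lebesgue_nbhd[measurable]: "nbhd A r \<in> sets lebesgue"
  by (rule sets_completionI_sets) (simp add: borel_open open_nbhd)

lemma bounded_nbhd:
  assumes "bounded A"
  shows "bounded (nbhd A r)"
proof -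
  obtain R where R: "\<forall>a\<in>A. norm a \<le> R"
    using assms by (auto simp: bounded_iff)
  have "nbhd A r \<subseteq> cball 0 (R + r)"
  proof
    fix x assume "x \<in> nbhd A r"
    then obtain a where "a \<in> A" "dist x a < r"
      by (auto simp: nbhd_def)
    with R norm_triangle_sub[of x a] show "x \<in> cball 0 (R + r)"
      by (auto simp: dist_norm)
  qed
  then show ?thesis
    by (rule bounded_subset[OF bounded_cball])
qed

lemma nbhd_lmeasurable: "bounded A \<Longrightarrow> nbhd A r \<in> lmeasurable"
  by (simp add: bounded_nbhd bounded_set_imp_lmeasurable)

lemma bounded_frontier: "bounded S \<Longrightarrow> bounded (frontier S)"
  by (metis bounded_Int bounded_closure frontier_closures)

definition escape_measure :: "'a::euclidean_space set \<Rightarrow> 'a \<Rightarrow> ennreal" where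
  "escape_measure \<Omega> w = emeasure lebesgue {y \<in> \<Omega>. y + w \<notin> \<Omega>}"

lemma escape_measure_le_emeasure:
  "\<Omega> \<in> sets lebesgue \<Longrightarrow> escape_measure \<Omega> w \<le> emeasure lebesgue \<Omega>"
  unfolding escape_measure_def by (rule emeasure_mono) auto

lemma escape_measure_le_nbhd:
  assumes "norm w < r"
  shows "escape_measure \<Omega> w \<le> emeasure lebesgue (nbhd (frontier \<Omega>) r)"
  unfolding escape_measure_def
proof (rule emeasure_mono[OF _ sets_lebesgue_nbhd])
  show "{y \<in> \<Omega>. y + w \<notin> \<Omega>} \<subseteq> nbhd (frontier \<Omega>) r"
  proof
    fix y assume "y \<in> {y \<in> \<Omega>. y + w \<notin> \<Omega>}"
    then obtain p where p: "p \<in> closed_segment y (y + w)" "p \<in> frontier \<Omega>"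
      using connected_Int_frontier[OF connected_segment, of y "y + w" \<Omega>] by auto
    have "dist y p \<le> norm w"
      using dist_in_closed_segment[OF p(1)] by (simp add: dist_commute dist_norm)
    with p(2) assms show "y \<in> nbhd (frontier \<Omega>) r"
      by (force simp: nbhd_def)
  qed
qed

lemma emeasure_entering_eq_escape_measure:
  assumes [measurable]: "\<Omega> \<in> sets lebesgue" and fin: "emeasure lebesgue \<Omega> < \<infinity>"
  shows "emeasure lebesgue {y. y \<notin> \<Omega> \<and> y + w \<in> \<Omega>} = escape_measure \<Omega> w"
proof -
  define P where "P = {y. y + w \<in> \<Omega>}"
  have [measurable]: "P \<in> sets lebesgue"
    unfolding P_def by measurable
  have "emeasure lebesgue P = emeasure lebesgue \<Omega>"
    using emeasure_lebesgue_affine_vimage[of \<Omega> 1 w] by (simp add: P_def add.commute)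
  moreover have "emeasure lebesgue (\<Omega> \<inter> P) \<noteq> \<infinity>"
    using emeasure_mono[of "\<Omega> \<inter> P" \<Omega> lebesgue] fin by auto
  moreover have "{y. y \<notin> \<Omega> \<and> y + w \<in> \<Omega>} = P - \<Omega> \<inter> P" "{y \<in> \<Omega>. y + w \<notin> \<Omega>} = \<Omega> - \<Omega> \<inter> P"
    by (auto simp: P_def)
  ultimately show ?thesis
    unfolding escape_measure_def by (simp add: emeasure_Diff)
qed

lemma nbhd_measure_bound_nonneg:
  assumes "\<delta> > 0" and small: "\<And>s. 0 < s \<Longrightarrow> s < \<delta> \<Longrightarrow> measure lebesgue (nbhd A s) \<le> M * s powr \<gamma>"
  shows "0 \<le> M"
proof -
  have "0 \<le> M * (\<delta> / 2) powr \<gamma>"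
    using small[of "\<delta> / 2"] \<open>\<delta> > 0\<close> measure_nonneg[of lebesgue "nbhd A (\<delta> / 2)"] by linarith
  with \<open>\<delta> > 0\<close> show ?thesis
    by (simp add: zero_le_mult_iff)
qed

lemma escape_measure_le_powr:
  fixes \<Omega> :: "'a::euclidean_space set"
  assumes \<Omega>: "\<Omega> \<in> sets lebesgue" "bounded \<Omega>" and \<delta>: "\<delta> > 0" and \<gamma>: "\<gamma> \<ge> 0"
    and small: "\<And>s. 0 < s \<Longrightarrow> s < \<delta> \<Longrightarrow> measure lebesgue (nbhd (frontier \<Omega>) s) \<le> M * s powr \<gamma>"
  shows "escape_measure \<Omega> w \<le> ennreal (M * (2 * norm w) powr \<gamma> +
    measure lebesgue \<Omega> * (2 * norm w / \<delta>) powr \<gamma> * indicator {w. \<delta> \<le> 2 * norm w} w)"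
proof -
  have M: "0 \<le> M"
    by (rule nbhd_measure_bound_nonneg[OF \<delta> small])
  consider "w = 0" | "w \<noteq> 0" "2 * norm w < \<delta>" | "\<delta> \<le> 2 * norm w"
    by (cases "w = 0"; cases "2 * norm w < \<delta>") auto
  then show ?thesis
  proof cases
    case 1
    then show ?thesis
      by (simp add: escape_measure_def)
  next
    case 2
    have "escape_measure \<Omega> w \<le> emeasure lebesgue (nbhd (frontier \<Omega>) (2 * norm w))"
      using 2 by (intro escape_measure_le_nbhd) simp
    also have "\<dots> = ennreal (measure lebesgue (nbhd (frontier \<Omega>) (2 * norm w)))"
      by (rule emeasure_eq_measure2[OF nbhd_lmeasurable[OF bounded_frontier[OF \<Omega>(2)]]])
    also have "\<dots> \<le> ennreal (M * (2 * norm w) powr \<gamma>)"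
      using 2 by (intro ennreal_leI small) auto
    finally show ?thesis
      using 2 by simp
  next
    case 3
    have "escape_measure \<Omega> w \<le> emeasure lebesgue \<Omega>"
      by (rule escape_measure_le_emeasure[OF \<Omega>(1)])
    also have "\<dots> = ennreal (measure lebesgue \<Omega>)"
      by (rule emeasure_eq_measure2[OF bounded_set_imp_lmeasurable[OF \<Omega>(2,1)]])
    also have "\<dots> \<le> ennreal (measure lebesgue \<Omega> * (2 * norm w / \<delta>) powr \<gamma>)"
    proof -
      have "1 \<le> (2 * norm w / \<delta>) powr \<gamma>"
        using 3 \<delta> \<gamma> by (intro ge_one_powr_ge_zero) auto
      then show ?thesis
        using mult_left_mono[OF _ measure_nonneg[of lebesgue \<Omega>]] by (intro ennreal_leI) fastforce
    qed
    also have "\<dots> \<le> ennreal (M * (2 * norm w) powr \<gamma> +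
        measure lebesgue \<Omega> * (2 * norm w / \<delta>) powr \<gamma> * indicator {w. \<delta> \<le> 2 * norm w} w)"
      using 3 M by (intro ennreal_leI) simp
    finally show ?thesis .
  qed
qed

lemma emeasure_crossing_ge:
  fixes \<Omega> :: "'a::euclidean_space set"
  assumes [measurable]: "\<Omega> \<in> sets lebesgue"
    and density: "\<forall>x\<in>frontier \<Omega>. \<forall>r\<in>{0<..<1}.
      min (measure lebesgue (ball x r \<inter> \<Omega>)) (measure lebesgue (ball x r \<inter> (- \<Omega>))) \<ge> D * r ^ DIM('a)"
    and t: "t > 0" and small: "a * t / 2 < 1" and y: "y \<in> nbhd (frontier \<Omega>) (a * t / 2)"
  shows "ennreal (D * (a / 2) ^ DIM('a)) \<le> emeasure lebesgue {z \<in> cball 0 a. (y \<in> \<Omega>) \<noteq> (y + t *\<^sub>R z \<in> \<Omega>)}"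
proof -
  define s where "s = a * t / 2"
  obtain x where x: "x \<in> frontier \<Omega>" "dist y x < s"
    using y by (auto simp: nbhd_def s_def)
  then have "0 < s" "s < 1"
    using small zero_le_dist[of y x] unfolding s_def by linarith+
  define S where "S = ball x s \<inter> (if y \<in> \<Omega> then - \<Omega> else \<Omega>)"
  have S_meas: "S \<in> lmeasurable"
    unfolding S_def by (intro bounded_set_imp_lmeasurable) auto
  have "D * s ^ DIM('a) \<le> measure lebesgue S"
    using density x(1) \<open>0 < s\<close> \<open>s < 1\<close> by (auto simp: S_def)
  moreover have "D * s ^ DIM('a) = t ^ DIM('a) * (D * (a / 2) ^ DIM('a))"
    by (simp add: s_def power_mult_distrib[symmetric] mult_ac)
  ultimately have "ennreal (t ^ DIM('a)) * ennreal (D * (a / 2) ^ DIM('a)) \<le> emeasure lebesgue S"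
    using S_meas t by (simp add: emeasure_eq_measure2 ennreal_mult'[symmetric])
  also have "\<dots> = ennreal (t ^ DIM('a)) * emeasure lebesgue {z. y + t *\<^sub>R z \<in> S}"
    using emeasure_lebesgue_affine_vimage[of S t y] S_meas t by simp
  also have "\<dots> \<le> ennreal (t ^ DIM('a)) * emeasure lebesgue {z \<in> cball 0 a. (y \<in> \<Omega>) \<noteq> (y + t *\<^sub>R z \<in> \<Omega>)}"
  proof (intro mult_left_mono emeasure_mono)
    show "{z \<in> cball 0 a. (y \<in> \<Omega>) \<noteq> (y + t *\<^sub>R z \<in> \<Omega>)} \<in> sets lebesgue"
      by measurable
    show "{z. y + t *\<^sub>R z \<in> S} \<subseteq> {z \<in> cball 0 a. (y \<in> \<Omega>) \<noteq> (y + t *\<^sub>R z \<in> \<Omega>)}"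
    proof
      fix z assume "z \<in> {z. y + t *\<^sub>R z \<in> S}"
      then have "dist (y + t *\<^sub>R z) x < s" and cross: "(y \<in> \<Omega>) \<noteq> (y + t *\<^sub>R z \<in> \<Omega>)"
        by (auto simp: S_def dist_commute split: if_splits)
      moreover have "dist y (y + t *\<^sub>R z) = t * norm z"
        using t by (simp add: dist_norm)
      ultimately have "t * norm z < a * t"
        using dist_triangle2[of y "y + t *\<^sub>R z" x] x(2) unfolding s_def by linarith
      with t cross show "z \<in> {z \<in> cball 0 a. (y \<in> \<Omega>) \<noteq> (y + t *\<^sub>R z \<in> \<Omega>)}"
        by (simp add: mult.commute[of a t])
    qed
  qed simp
  finally show ?thesis
    using t by (simp add: ennreal_mult_le_mult_iff)
qed

lemma nn_integral_crossing:
  fixes \<Omega> :: "'a::euclidean_space set"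
  assumes \<Omega>[measurable]: "\<Omega> \<in> sets lebesgue" and fin: "emeasure lebesgue \<Omega> < \<infinity>"
    and [measurable]: "g \<in> borel_measurable lebesgue" and t: "t \<noteq> 0"
  shows "(\<integral>\<^sup>+y. \<integral>\<^sup>+z. g z * indicator {z. (y \<in> \<Omega>) \<noteq> (y + t *\<^sub>R z \<in> \<Omega>)} z \<partial>lebesgue \<partial>lebesgue) =
    2 * (\<integral>\<^sup>+z. g z * escape_measure \<Omega> (t *\<^sub>R z) \<partial>lebesgue)"
proof -
  let ?I = "\<lambda>S y. \<integral>\<^sup>+z. g z * indicator S (y + t *\<^sub>R z) \<partial>lebesgue"
  have [measurable]: "?I \<Omega> \<in> borel_measurable lebesgue" "?I (- \<Omega>) \<in> borel_measurable lebesgue"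
    using borel_measurable_nn_integral_indicator_affine[of _ g, OF _ _ t] by simp_all
  have "(\<integral>\<^sup>+z. g z * indicator {z. (y \<in> \<Omega>) \<noteq> (y + t *\<^sub>R z \<in> \<Omega>)} z \<partial>lebesgue) =
      indicator \<Omega> y * ?I (- \<Omega>) y + indicator (- \<Omega>) y * ?I \<Omega> y" for y
    by (cases "y \<in> \<Omega>") (auto simp: indicator_def intro!: nn_integral_cong)
  then have "(\<integral>\<^sup>+y. \<integral>\<^sup>+z. g z * indicator {z. (y \<in> \<Omega>) \<noteq> (y + t *\<^sub>R z \<in> \<Omega>)} z \<partial>lebesgue \<partial>lebesgue) =
      (\<integral>\<^sup>+y. indicator \<Omega> y * ?I (- \<Omega>) y \<partial>lebesgue) + (\<integral>\<^sup>+y. indicator (- \<Omega>) y * ?I \<Omega> y \<partial>lebesgue)"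
    by (simp add: nn_integral_add)
  also have "\<dots> = (\<integral>\<^sup>+z. g z * escape_measure \<Omega> (t *\<^sub>R z) \<partial>lebesgue) +
      (\<integral>\<^sup>+z. g z * escape_measure \<Omega> (t *\<^sub>R z) \<partial>lebesgue)"
  proof -
    have "\<Omega> \<inter> {y. y + t *\<^sub>R z \<in> - \<Omega>} = {y \<in> \<Omega>. y + t *\<^sub>R z \<notin> \<Omega>}"
      "- \<Omega> \<inter> {y. y + t *\<^sub>R z \<in> \<Omega>} = {y. y \<notin> \<Omega> \<and> y + t *\<^sub>R z \<in> \<Omega>}" for z
      by auto
    then show ?thesis
      by (simp add: nn_integral_indicator_affine_Fubini t escape_measure_def[symmetric]
          emeasure_entering_eq_escape_measure[OF \<Omega> fin])
  qed
  finally show ?thesis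
    by (simp add: mult_2)
qed

lemma nn_integral_escape_measure_finite:
  fixes \<Omega> :: "'a::euclidean_space set" and J :: "'a \<Rightarrow> real"
  assumes \<Omega>: "\<Omega> \<in> sets lebesgue" "emeasure lebesgue \<Omega> < \<infinity>" and J: "integrable lebesgue J"
  shows "(\<integral>\<^sup>+z. J z * escape_measure \<Omega> (t *\<^sub>R z) \<partial>lebesgue) < \<infinity>"
proof -
  have "(\<integral>\<^sup>+z. J z * escape_measure \<Omega> (t *\<^sub>R z) \<partial>lebesgue) \<le> (\<integral>\<^sup>+z. norm (J z) * emeasure lebesgue \<Omega> \<partial>lebesgue)"
    using escape_measure_le_emeasure[OF \<Omega>(1)] by (intro nn_integral_mono mult_mono) (auto intro: ennreal_leI)
  also have "\<dots> = (\<integral>\<^sup>+z. norm (J z) \<partial>lebesgue) * emeasure lebesgue \<Omega>"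
    using J by (intro nn_integral_multc) auto
  also have "\<dots> < \<infinity>"
    using J \<Omega>(2) by (simp add: integrable_iff_bounded ennreal_mult_less_top)
  finally show ?thesis .
qed

section \<open>Two-sided bounds for the nonlocal functional\<close>

lemma nonlocal_J_eq_escape_measure:
  fixes \<Omega> :: "'a::euclidean_space set" and J :: "'a \<Rightarrow> real"
  assumes \<Omega>[measurable]: "\<Omega> \<in> sets lebesgue" and J: "integrable lebesgue J" "\<And>z. 0 \<le> J z"
    and t: "t > 0"
  shows "nonlocal_J J \<Omega> t = t ^ DIM('a) * enn2real (\<integral>\<^sup>+z. J z * escape_measure \<Omega> (t *\<^sub>R z) \<partial>lebesgue)"
proof -
  have J_meas[measurable]: "J \<in> borel_measurable lebesgue"
    using J by auto
  define \<phi> where "\<phi> y = (\<integral>\<^sup>+z. ennreal (J z) * indicator (- \<Omega>) (y + t *\<^sub>R z) \<partial>lebesgue)" for y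
  have [measurable]: "\<phi> \<in> borel_measurable lebesgue"
    unfolding \<phi>_def using t by (intro borel_measurable_nn_integral_indicator_affine) auto
  have \<phi>_finite: "\<phi> y < \<infinity>" for y
  proof -
    have "\<phi> y \<le> (\<integral>\<^sup>+z. J z \<partial>lebesgue)"
      unfolding \<phi>_def by (intro nn_integral_mono) (simp add: indicator_def)
    also have "\<dots> < \<infinity>"
      using J by (simp add: integrable_iff_bounded)
    finally show ?thesis .
  qed
  have "nonlocal_J J \<Omega> t = t ^ DIM('a) * (LINT y|lebesgue. indicator \<Omega> y * enn2real (\<phi> y))"
    unfolding nonlocal_J_def \<phi>_def
      set_lebesgue_integral_affine_substitution[OF sets_lebesgue_Compl[OF \<Omega>] J_meas J(2) t]
    by (simp add: set_lebesgue_integral_def mult.commute)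
  also have "(LINT y|lebesgue. indicator \<Omega> y * enn2real (\<phi> y)) =
      enn2real (\<integral>\<^sup>+y. ennreal (indicator \<Omega> y * enn2real (\<phi> y)) \<partial>lebesgue)"
    by (intro integral_eq_nn_integral) auto
  also have "(\<integral>\<^sup>+y. ennreal (indicator \<Omega> y * enn2real (\<phi> y)) \<partial>lebesgue) = (\<integral>\<^sup>+y. indicator \<Omega> y * \<phi> y \<partial>lebesgue)"
    using \<phi>_finite by (intro nn_integral_cong) (simp add: indicator_def)
  also have "\<dots> = (\<integral>\<^sup>+z. J z * escape_measure \<Omega> (t *\<^sub>R z) \<partial>lebesgue)"
  proof -
    have "\<Omega> \<inter> {y. y + t *\<^sub>R z \<in> - \<Omega>} = {y \<in> \<Omega>. y + t *\<^sub>R z \<notin> \<Omega>}" for z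
      by auto
    then show ?thesis
      unfolding \<phi>_def using t by (simp add: nn_integral_indicator_affine_Fubini escape_measure_def)
  qed
  finally show ?thesis .
qed

lemma nn_integral_escape_measure_ge:
  fixes \<Omega> :: "'a::euclidean_space set" and J :: "'a \<Rightarrow> real"
  assumes \<Omega>[measurable]: "\<Omega> \<in> sets lebesgue" and bounded: "bounded \<Omega>"
    and density: "\<forall>x\<in>frontier \<Omega>. \<forall>r\<in>{0<..<1}.
      min (measure lebesgue (ball x r \<inter> \<Omega>)) (measure lebesgue (ball x r \<inter> (- \<Omega>))) \<ge> D * r ^ DIM('a)"
    and [measurable]: "J \<in> borel_measurable lebesgue" and c: "0 \<le> c" and J_ge: "\<And>z. norm z \<le> a \<Longrightarrow> c \<le> J z"
    and t: "t > 0" and small: "a * t / 2 < 1"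
  shows "ennreal (c * D * (a / 2) ^ DIM('a)) * emeasure lebesgue (nbhd (frontier \<Omega>) (a * t / 2))
    \<le> 2 * (\<integral>\<^sup>+z. J z * escape_measure \<Omega> (t *\<^sub>R z) \<partial>lebesgue)"
proof -
  let ?K = "ennreal (c * D * (a / 2) ^ DIM('a))"
  let ?cross = "\<lambda>y. {z. (y \<in> \<Omega>) \<noteq> (y + t *\<^sub>R z \<in> \<Omega>)}"
  have "?K * indicator (nbhd (frontier \<Omega>) (a * t / 2)) y \<le>
      (\<integral>\<^sup>+z. ennreal (J z) * indicator (?cross y) z \<partial>lebesgue)" for y
  proof (cases "y \<in> nbhd (frontier \<Omega>) (a * t / 2)")
    case True
    have "?K = ennreal c * ennreal (D * (a / 2) ^ DIM('a))"
      using c by (simp add: ennreal_mult' mult.assoc)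
    also have "\<dots> \<le> ennreal c * emeasure lebesgue (cball 0 a \<inter> ?cross y)"
      using emeasure_crossing_ge[OF \<Omega> density t small True] by (auto intro: mult_left_mono simp: Int_def)
    also have "\<dots> = (\<integral>\<^sup>+z. ennreal c * indicator (cball 0 a \<inter> ?cross y) z \<partial>lebesgue)"
      by (rule nn_integral_cmult_indicator[symmetric]) measurable
    also have "\<dots> \<le> (\<integral>\<^sup>+z. ennreal (J z) * indicator (?cross y) z \<partial>lebesgue)"
      using J_ge by (intro nn_integral_mono) (auto simp: indicator_def intro: ennreal_leI)
    finally show ?thesis
      using True by simp
  qed simp
  then have "(\<integral>\<^sup>+y. ?K * indicator (nbhd (frontier \<Omega>) (a * t / 2)) y \<partial>lebesgue) \<le>
      (\<integral>\<^sup>+y. \<integral>\<^sup>+z. ennreal (J z) * indicator (?cross y) z \<partial>lebesgue \<partial>lebesgue)"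
    by (rule nn_integral_mono)
  also have "\<dots> = 2 * (\<integral>\<^sup>+z. J z * escape_measure \<Omega> (t *\<^sub>R z) \<partial>lebesgue)"
    using bounded_set_imp_lmeasurable[OF bounded \<Omega>] t
    by (intro nn_integral_crossing) (auto simp: fmeasurable_def)
  finally show ?thesis
    by (simp add: nn_integral_cmult_indicator)
qed

lemma nonlocal_J_ge:
  fixes \<Omega> :: "'a::euclidean_space set" and J :: "'a \<Rightarrow> real"
  assumes \<Omega>: "\<Omega> \<in> sets lebesgue" "bounded \<Omega>"
    and density: "\<forall>x\<in>frontier \<Omega>. \<forall>r\<in>{0<..<1}.
      min (measure lebesgue (ball x r \<inter> \<Omega>)) (measure lebesgue (ball x r \<inter> (- \<Omega>))) \<ge> D * r ^ DIM('a)"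
    and J: "integrable lebesgue J" "\<And>z. 0 \<le> J z" and J_ge: "\<And>z. norm z \<le> a \<Longrightarrow> c \<le> J z"
    and "0 \<le> c" "0 \<le> D" "0 < a" and t: "t > 0" and small: "a * t / 2 < 1"
  shows "t ^ DIM('a) * (c * D * (a / 2) ^ DIM('a) / 2) * measure lebesgue (nbhd (frontier \<Omega>) (a * t / 2))
    \<le> nonlocal_J J \<Omega> t"
proof -
  let ?I = "\<integral>\<^sup>+z. J z * escape_measure \<Omega> (t *\<^sub>R z) \<partial>lebesgue"
  let ?V = "measure lebesgue (nbhd (frontier \<Omega>) (a * t / 2))"
  have J_meas: "J \<in> borel_measurable lebesgue"
    using J(1) by auto
  have I_finite: "?I < \<infinity>"
    using fmeasurableD2[OF bounded_set_imp_lmeasurable[OF \<Omega>(2,1)]] J(1)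
    by (intro nn_integral_escape_measure_finite[OF \<Omega>(1)]) (auto simp: top.not_eq_extremum)
  have "ennreal (c * D * (a / 2) ^ DIM('a) * ?V) =
      ennreal (c * D * (a / 2) ^ DIM('a)) * emeasure lebesgue (nbhd (frontier \<Omega>) (a * t / 2))"
    using emeasure_eq_measure2[OF nbhd_lmeasurable[OF bounded_frontier[OF \<Omega>(2)]]]
      \<open>0 \<le> c\<close> \<open>0 \<le> D\<close> \<open>0 < a\<close> by (simp add: ennreal_mult)
  also have "\<dots> \<le> 2 * ?I"
    by (rule nn_integral_escape_measure_ge[OF \<Omega> density J_meas \<open>0 \<le> c\<close> J_ge t small])
  finally have "c * D * (a / 2) ^ DIM('a) * ?V \<le> enn2real (2 * ?I)"
    using enn2real_mono I_finite \<open>0 \<le> c\<close> \<open>0 \<le> D\<close> \<open>0 < a\<close>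
    by (fastforce simp: ennreal_mult_less_top)
  then have "c * D * (a / 2) ^ DIM('a) * ?V \<le> 2 * enn2real ?I"
    by (simp add: enn2real_mult)
  then show ?thesis
    using nonlocal_J_eq_escape_measure[OF \<Omega>(1) J t] t by (simp add: mult_left_mono)
qed

lemma escape_measure_scaleR_le_powr:
  fixes \<Omega> :: "'a::euclidean_space set"
  assumes \<Omega>: "\<Omega> \<in> sets lebesgue" "bounded \<Omega>" and \<delta>: "\<delta> > 0" and \<gamma>: "\<gamma> \<ge> 0" and t: "t > 0"
    and small: "\<And>s. 0 < s \<Longrightarrow> s < \<delta> \<Longrightarrow> measure lebesgue (nbhd (frontier \<Omega>) s) \<le> M * s powr \<gamma>"
  shows "escape_measure \<Omega> (t *\<^sub>R z) \<le> ennreal (t powr \<gamma> * (M * 2 powr \<gamma> * norm z powr \<gamma> +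
    measure lebesgue \<Omega> * (2 / \<delta>) powr \<gamma> * (norm z powr \<gamma> * indicator {z. \<delta> / (2 * t) \<le> norm z} z)))"
proof -
  have "(2 * norm (t *\<^sub>R z)) powr \<gamma> = t powr \<gamma> * (2 powr \<gamma> * norm z powr \<gamma>)"
    using t by (simp add: powr_mult mult_ac)
  moreover have "(2 * norm (t *\<^sub>R z) / \<delta>) powr \<gamma> = t powr \<gamma> * ((2 / \<delta>) powr \<gamma> * norm z powr \<gamma>)"
    using t \<delta> by (simp add: powr_mult powr_divide mult_ac)
  moreover have "\<delta> \<le> 2 * norm (t *\<^sub>R z) \<longleftrightarrow> \<delta> / (2 * t) \<le> norm z"
    using t by (simp add: field_simps)
  ultimately show ?thesis
    using escape_measure_le_powr[OF \<Omega> \<delta> \<gamma> small, of "t *\<^sub>R z"]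
    by (simp add: indicator_def algebra_simps)
qed

lemma nonlocal_J_le:
  fixes \<Omega> :: "'a::euclidean_space set" and J :: "'a \<Rightarrow> real"
  assumes \<Omega>: "\<Omega> \<in> sets lebesgue" "bounded \<Omega>"
    and J: "integrable lebesgue J" "\<And>z. 0 \<le> J z" and J_moment: "integrable lebesgue (\<lambda>z. J z * norm z powr \<gamma>)"
    and t: "t > 0" and \<delta>: "\<delta> > 0" and \<gamma>: "\<gamma> \<ge> 0"
    and small: "\<And>s. 0 < s \<Longrightarrow> s < \<delta> \<Longrightarrow> measure lebesgue (nbhd (frontier \<Omega>) s) \<le> M * s powr \<gamma>"
  shows "nonlocal_J J \<Omega> t \<le> t ^ DIM('a) * t powr \<gamma> *
    (M * 2 powr \<gamma> * (LINT z|lebesgue. J z * norm z powr \<gamma>) + measure lebesgue \<Omega> * (2 / \<delta>) powr \<gamma> *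
      (LINT z|lebesgue. J z * norm z powr \<gamma> * indicator {z. \<delta> / (2 * t) \<le> norm z} z))"
proof -
  define tail where "tail z = J z * norm z powr \<gamma> * indicator {z. \<delta> / (2 * t) \<le> norm z} z" for z
  define E where "E (z::'a) = t powr \<gamma> * (M * 2 powr \<gamma> * norm z powr \<gamma> +
    measure lebesgue \<Omega> * (2 / \<delta>) powr \<gamma> * (norm z powr \<gamma> * indicator {z. \<delta> / (2 * t) \<le> norm z} z))" for z
  have [measurable]: "J \<in> borel_measurable lebesgue"
    using J(1) by auto
  have tail_integrable: "integrable lebesgue tail"
    unfolding tail_def using J_moment
    by (intro Bochner_Integration.integrable_bound[OF J_moment]) (auto simp: indicator_def)
  have JE: "J z * E z = t powr \<gamma> * (M * 2 powr \<gamma> * (J z * norm z powr \<gamma>) +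
      measure lebesgue \<Omega> * (2 / \<delta>) powr \<gamma> * tail z)" for z
    by (simp add: E_def tail_def algebra_simps)
  have JE_integrable: "integrable lebesgue (\<lambda>z. J z * E z)"
    unfolding JE using J_moment tail_integrable by simp
  have JE_nonneg: "0 \<le> J z * E z" for z
    using J(2)[of z] nbhd_measure_bound_nonneg[OF \<delta> small] by (simp add: E_def)
  have "J z * escape_measure \<Omega> (t *\<^sub>R z) \<le> ennreal (J z * E z)" for z
    using escape_measure_scaleR_le_powr[OF \<Omega> \<delta> \<gamma> t small, of z] J(2)[of z]
    by (simp add: E_def ennreal_mult' mult_left_mono)
  then have "(\<integral>\<^sup>+z. J z * escape_measure \<Omega> (t *\<^sub>R z) \<partial>lebesgue) \<le> (\<integral>\<^sup>+z. ennreal (J z * E z) \<partial>lebesgue)"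
    by (rule nn_integral_mono)
  also have "\<dots> = ennreal (LINT z|lebesgue. J z * E z)"
    by (rule nn_integral_eq_integral[OF JE_integrable]) (simp add: JE_nonneg)
  finally have "enn2real (\<integral>\<^sup>+z. J z * escape_measure \<Omega> (t *\<^sub>R z) \<partial>lebesgue) \<le> (LINT z|lebesgue. J z * E z)"
    using JE_nonneg by (simp add: enn2real_leI integral_nonneg)
  moreover have "(LINT z|lebesgue. J z * E z) = t powr \<gamma> * (M * 2 powr \<gamma> * (LINT z|lebesgue. J z * norm z powr \<gamma>) +
      measure lebesgue \<Omega> * (2 / \<delta>) powr \<gamma> * (LINT z|lebesgue. tail z))"
    unfolding JE using J_moment tail_integrable by simp
  ultimately show ?thesis
    using nonlocal_J_eq_escape_measure[OF \<Omega>(1) J t] t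
    by (simp add: tail_def mult.assoc mult_left_mono)
qed

section \<open>Asymptotics as \<open>t \<rightarrow> 0\<close>\<close>

lemma powr_two_times_minus:
  fixes t :: real
  assumes "t > 0"
  shows "t powr (2 * real n - \<alpha>) = t ^ n * t powr (real n - \<alpha>)"
  using assms by (simp add: powr_realpow[symmetric] powr_add[symmetric])

lemma Liminf_at_right_0_rescale:
  fixes f :: "real \<Rightarrow> 'a::complete_linorder"
  assumes "c > 0"
  shows "Liminf (at_right 0) (\<lambda>t. f (c * t)) = Liminf (at_right 0) f"
  using Liminf_filtermap_eq[of "(*) c" "at_right 0" f] filtermap_times_pos_at_right[OF assms, of 0] assms
  by (simp add: inj_on_def)

lemma nonlocal_J_Liminf_ge:
  fixes \<Omega> :: "'a::euclidean_space set" and J :: "'a \<Rightarrow> real"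
  assumes \<Omega>: "\<Omega> \<in> sets lebesgue" "bounded \<Omega>"
    and density: "\<forall>x\<in>frontier \<Omega>. \<forall>r\<in>{0<..<1}.
      min (measure lebesgue (ball x r \<inter> \<Omega>)) (measure lebesgue (ball x r \<inter> (- \<Omega>))) \<ge> D * r ^ DIM('a)"
    and J: "integrable lebesgue J" "\<And>z. 0 \<le> J z" and J_ge: "\<And>z. norm z \<le> a \<Longrightarrow> c \<le> J z"
    and "0 \<le> c" "0 \<le> D" "0 < a"
  shows "ereal (c * D * (a / 2) ^ DIM('a) * (a / 2) powr (real DIM('a) - \<alpha>) / 2) * lower_minkowski \<alpha> (frontier \<Omega>)
    \<le> Liminf (at_right 0) (\<lambda>t. ereal (nonlocal_J J \<Omega> t / t powr (2 * real DIM('a) - \<alpha>)))"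
proof -
  define \<gamma> where "\<gamma> = real DIM('a) - \<alpha>"
  define K where "K = c * D * (a / 2) ^ DIM('a) * (a / 2) powr \<gamma> / 2"
  define h where "h = (\<lambda>s. ereal (measure lebesgue (nbhd (frontier \<Omega>) s) / s powr \<gamma>))"
  have K: "0 \<le> K"
    using \<open>0 \<le> c\<close> \<open>0 \<le> D\<close> \<open>0 < a\<close> by (simp add: K_def)
  have "\<forall>\<^sub>F t in at_right 0. ereal K * h (a / 2 * t) \<le> ereal (nonlocal_J J \<Omega> t / t powr (2 * real DIM('a) - \<alpha>))"
    unfolding eventually_at_right_field
  proof (intro exI[of _ "2 / a"] conjI allI impI)
    fix t :: real assume t: "0 < t" "t < 2 / a"
    then have small: "a * t / 2 < 1"
      using \<open>0 < a\<close> by (simp add: field_simps)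
    have "(a / 2 * t) powr \<gamma> = (a / 2) powr \<gamma> * t powr \<gamma>"
      using powr_mult[of "a / 2" t \<gamma>] t \<open>0 < a\<close> by simp
    then have "K * (measure lebesgue (nbhd (frontier \<Omega>) (a / 2 * t)) / (a / 2 * t) powr \<gamma>) =
        t ^ DIM('a) * (c * D * (a / 2) ^ DIM('a) / 2) * measure lebesgue (nbhd (frontier \<Omega>) (a * t / 2)) /
        (t ^ DIM('a) * t powr \<gamma>)"
      using t \<open>0 < a\<close> by (simp add: K_def field_simps)
    also have "\<dots> \<le> nonlocal_J J \<Omega> t / (t ^ DIM('a) * t powr \<gamma>)"
      using t by (intro divide_right_mono nonlocal_J_ge[OF \<Omega> density J J_ge \<open>0 \<le> c\<close> \<open>0 \<le> D\<close> \<open>0 < a\<close> t(1) small])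
        auto
    finally show "ereal K * h (a / 2 * t) \<le> ereal (nonlocal_J J \<Omega> t / t powr (2 * real DIM('a) - \<alpha>))"
      using t by (simp add: h_def \<gamma>_def powr_two_times_minus)
  qed (use \<open>0 < a\<close> in simp)
  then have "Liminf (at_right 0) (\<lambda>t. ereal K * h (a / 2 * t)) \<le>
      Liminf (at_right 0) (\<lambda>t. ereal (nonlocal_J J \<Omega> t / t powr (2 * real DIM('a) - \<alpha>)))"
    by (rule Liminf_mono)
  moreover have "Liminf (at_right 0) (\<lambda>t. ereal K * h (a / 2 * t)) =
      ereal K * Liminf (at_right 0) (\<lambda>t. h (a / 2 * t))"
    by (rule Liminf_ereal_mult_left) (simp_all add: K)
  moreover have "Liminf (at_right 0) (\<lambda>t. h (a / 2 * t)) = lower_minkowski \<alpha> (frontier \<Omega>)"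
    unfolding Liminf_at_right_0_rescale[of "a / 2" h, OF half_gt_zero[OF \<open>0 < a\<close>]]
    by (simp add: lower_minkowski_def h_def \<gamma>_def)
  ultimately show ?thesis
    by (simp add: K_def \<gamma>_def)
qed

lemma tendsto_integral_norm_tail:
  fixes g :: "'a::euclidean_space \<Rightarrow> real"
  assumes g: "integrable lebesgue g"
  shows "((\<lambda>R. LINT z|lebesgue. g z * indicator {z. R \<le> norm z} z) \<longlongrightarrow> 0) at_top"
proof -
  have "((\<lambda>R. LINT z|lebesgue. g z * indicator {z. R \<le> norm z} z) \<longlongrightarrow> (LINT (z::'a)|lebesgue. 0)) at_top"
  proof (rule integral_dominated_convergence_at_top)
    show "integrable lebesgue (\<lambda>z. norm (g z))"
      using g by simp
    show "AE z in lebesgue. ((\<lambda>R. g z * indicator {z. R \<le> norm z} z) \<longlongrightarrow> 0) at_top"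
    proof (rule AE_I2)
      fix z :: 'a
      have "\<forall>\<^sub>F R in at_top. g z * indicator {z. R \<le> norm z} z = 0"
        using eventually_gt_at_top[of "norm z"] by eventually_elim (simp add: indicator_def)
      then show "((\<lambda>R. g z * indicator {z. R \<le> norm z} z) \<longlongrightarrow> 0) at_top"
        by (rule tendsto_eventually)
    qed
    show "\<forall>\<^sub>F R in at_top. AE z in lebesgue. norm (g z * indicator {z. R \<le> norm z} z) \<le> norm (g z)"
      by (intro always_eventually allI AE_I2) (simp add: indicator_def)
  qed (use g in auto)
  then show ?thesis
    by simp
qed

lemma upper_minkowski_less_imp_nbhd_bound:
  fixes A :: "'a::euclidean_space set"
  assumes "upper_minkowski \<alpha> A < ereal M"
  obtains \<delta> where "\<delta> > 0"
    "\<And>s. 0 < s \<Longrightarrow> s < \<delta> \<Longrightarrow> measure lebesgue (nbhd A s) \<le> M * s powr (real DIM('a) - \<alpha>)"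
proof -
  have "\<forall>\<^sub>F s in at_right 0. ereal (measure lebesgue (nbhd A s) / s powr (real DIM('a) - \<alpha>)) < ereal M"
    using assms unfolding upper_minkowski_def by (rule Limsup_lessD)
  then obtain \<delta> where \<delta>: "\<delta> > 0"
    and quotient_less: "\<And>s. 0 < s \<Longrightarrow> s < \<delta> \<Longrightarrow> measure lebesgue (nbhd A s) / s powr (real DIM('a) - \<alpha>) < M"
    unfolding eventually_at_right_field by auto
  show ?thesis
  proof (rule that[OF \<delta>])
    fix s :: real assume s: "0 < s" "s < \<delta>"
    with quotient_less[OF s] show "measure lebesgue (nbhd A s) \<le> M * s powr (real DIM('a) - \<alpha>)"
      by (simp add: divide_less_eq)
  qed
qed

lemma nonlocal_J_Limsup_le_of_nbhd_bound:
  fixes \<Omega> :: "'a::euclidean_space set" and J :: "'a \<Rightarrow> real"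
  assumes \<Omega>: "\<Omega> \<in> sets lebesgue" "bounded \<Omega>"
    and J: "integrable lebesgue J" "\<And>z. 0 \<le> J z"
    and J_moment: "integrable lebesgue (\<lambda>z. J z * norm z powr (real DIM('a) - \<alpha>))"
    and \<alpha>: "\<alpha> \<le> real DIM('a)" and \<delta>: "\<delta> > 0"
    and small: "\<And>s. 0 < s \<Longrightarrow> s < \<delta> \<Longrightarrow>
      measure lebesgue (nbhd (frontier \<Omega>) s) \<le> M * s powr (real DIM('a) - \<alpha>)"
  shows "Limsup (at_right 0) (\<lambda>t. ereal (nonlocal_J J \<Omega> t / t powr (2 * real DIM('a) - \<alpha>)))
    \<le> ereal (M * 2 powr (real DIM('a) - \<alpha>) * (LINT z|lebesgue. J z * norm z powr (real DIM('a) - \<alpha>)))"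
proof -
  define \<gamma> where "\<gamma> = real DIM('a) - \<alpha>"
  define G where "G = (LINT z|lebesgue. J z * norm z powr \<gamma>)"
  define c where "c = measure lebesgue \<Omega> * (2 / \<delta>) powr \<gamma>"
  define tail where "tail R = (LINT z|lebesgue. J z * norm z powr \<gamma> * indicator {z. R \<le> norm z} z)" for R
  let ?bound = "\<lambda>t. ereal (M * 2 powr \<gamma> * G + c * tail (\<delta> / (2 * t)))"
  have "\<forall>\<^sub>F t in at_right 0. ereal (nonlocal_J J \<Omega> t / t powr (2 * real DIM('a) - \<alpha>)) \<le> ?bound t"
  proof (rule eventually_at_right_less[THEN eventually_mono])
    fix t :: real assume t: "0 < t"
    have "\<gamma> \<ge> 0"
      using \<alpha> by (simp add: \<gamma>_def)
    have "nonlocal_J J \<Omega> t \<le> t ^ DIM('a) * t powr \<gamma> * (M * 2 powr \<gamma> * G + c * tail (\<delta> / (2 * t)))"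
      unfolding G_def c_def tail_def
      by (rule nonlocal_J_le[OF \<Omega> J J_moment[folded \<gamma>_def] t \<delta> \<open>\<gamma> \<ge> 0\<close> small[folded \<gamma>_def]])
    moreover have "t powr (2 * real DIM('a) - \<alpha>) = t ^ DIM('a) * t powr \<gamma>"
      unfolding \<gamma>_def using t by (rule powr_two_times_minus)
    ultimately show "ereal (nonlocal_J J \<Omega> t / t powr (2 * real DIM('a) - \<alpha>)) \<le> ?bound t"
      using t by (simp add: divide_le_eq mult_ac)
  qed
  then have "Limsup (at_right 0) (\<lambda>t. ereal (nonlocal_J J \<Omega> t / t powr (2 * real DIM('a) - \<alpha>))) \<le>
      Limsup (at_right 0) ?bound"
    by (rule Limsup_mono)
  also have "\<dots> = ereal (M * 2 powr \<gamma> * G)"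
  proof -
    have "filterlim (\<lambda>t. \<delta> / (2 * t)) at_top (at_right 0)"
      using filterlim_tendsto_pos_mult_at_top[OF tendsto_const _ filterlim_inverse_at_top_right, of "\<delta> / 2"] \<delta>
      by (simp add: field_simps)
    with tendsto_integral_norm_tail[OF J_moment[folded \<gamma>_def]]
    have "((\<lambda>t. tail (\<delta> / (2 * t))) \<longlongrightarrow> 0) (at_right 0)"
      unfolding tail_def by (rule filterlim_compose)
    from tendsto_add[OF tendsto_const tendsto_mult[OF tendsto_const this]]
    have "(?bound \<longlongrightarrow> ereal (M * 2 powr \<gamma> * G)) (at_right 0)"
      by (intro tendsto_ereal) simp
    then show ?thesis
      by (rule lim_imp_Limsup[OF trivial_limit_at_right_real])
  qed
  finally show ?thesis
    by (simp add: G_def \<gamma>_def)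
qed

lemma nonlocal_J_Limsup_le:
  fixes \<Omega> :: "'a::euclidean_space set" and J :: "'a \<Rightarrow> real"
  assumes \<Omega>: "\<Omega> \<in> sets lebesgue" "bounded \<Omega>"
    and J: "integrable lebesgue J" "\<And>z. 0 \<le> J z"
    and J_moment: "integrable lebesgue (\<lambda>z. J z * norm z powr (real DIM('a) - \<alpha>))"
    and \<alpha>: "\<alpha> \<le> real DIM('a)" and upper: "upper_minkowski \<alpha> (frontier \<Omega>) \<le> ereal M1"
  shows "Limsup (at_right 0) (\<lambda>t. ereal (nonlocal_J J \<Omega> t / t powr (2 * real DIM('a) - \<alpha>)))
    \<le> ereal (M1 * 2 powr (real DIM('a) - \<alpha>) * (LINT z|lebesgue. J z * norm z powr (real DIM('a) - \<alpha>)))"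
proof -
  let ?L = "Limsup (at_right 0) (\<lambda>t. ereal (nonlocal_J J \<Omega> t / t powr (2 * real DIM('a) - \<alpha>)))"
  let ?C = "2 powr (real DIM('a) - \<alpha>) * (LINT z|lebesgue. J z * norm z powr (real DIM('a) - \<alpha>))"
  have "((\<lambda>M. ereal (M * ?C)) \<longlongrightarrow> ereal (M1 * ?C)) (at_right M1)"
    by (intro tendsto_intros)
  moreover have "\<forall>\<^sub>F M in at_right M1. ?L \<le> ereal (M * ?C)"
  proof (rule eventually_at_right_less[THEN eventually_mono])
    fix M assume "M1 < M"
    with upper have "upper_minkowski \<alpha> (frontier \<Omega>) < ereal M"
      by (simp add: le_less_trans)
    then obtain \<delta> where "\<delta> > 0"
      and "\<And>s. 0 < s \<Longrightarrow> s < \<delta> \<Longrightarrow> measure lebesgue (nbhd (frontier \<Omega>) s) \<le> M * s powr (real DIM('a) - \<alpha>)"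
      using upper_minkowski_less_imp_nbhd_bound by blast
    then show "?L \<le> ereal (M * ?C)"
      using nonlocal_J_Limsup_le_of_nbhd_bound[OF \<Omega> J J_moment \<alpha>] by (simp add: mult.assoc)
  qed
  ultimately have "?L \<le> ereal (M1 * ?C)"
    by (rule tendsto_lowerbound) simp
  then show ?thesis
    by (simp add: mult.assoc)
qed

lemma min_one_le_powr:
  fixes x p :: real
  assumes "0 < x" "0 \<le> p" "p \<le> 1"
  shows "min 1 x \<le> x powr p"
proof (cases "x \<le> 1")
  case True
  then have "x powr 1 \<le> x powr p"
    using assms by (intro powr_mono') auto
  then show ?thesis
    using assms by simp
next
  case False
  then show ?thesis
    using assms by (simp add: ge_one_powr_ge_zero)
qed

lemma integrable_mult_norm_powr:
  fixes J :: "'a::euclidean_space \<Rightarrow> real"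
  assumes J: "integrable lebesgue J" and J_moment: "integrable lebesgue (\<lambda>z. J z * norm z ^ n)"
    and p: "0 \<le> p" "p \<le> real n"
  shows "integrable lebesgue (\<lambda>z. J z * norm z powr p)"
proof (rule Bochner_Integration.integrable_bound)
  show "integrable lebesgue (\<lambda>z. norm (J z) + norm (J z * norm z ^ n))"
    using J J_moment by simp
  have powr_bound: "norm z powr p \<le> 1 + norm z ^ n" for z :: 'a
  proof (cases "norm z \<le> 1")
    case True
    then show ?thesis
      using p powr_le1[of p "norm z"] by (intro add_increasing2) auto
  next
    case False
    then have "norm z powr p \<le> norm z powr real n"
      using p by (intro powr_mono) auto
    moreover have "norm z powr real n = norm z ^ n"
      using False by (intro powr_realpow) auto
    ultimately show ?thesis
      by simp
  qed
  show "AE z in lebesgue. norm (J z * norm z powr p) \<le> norm (norm (J z) + norm (J z * norm z ^ n))"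
  proof (rule AE_I2)
    fix z
    have "\<bar>J z\<bar> * norm z powr p \<le> \<bar>J z\<bar> * (1 + norm z ^ n)"
      by (intro mult_left_mono powr_bound) simp
    then show "norm (J z * norm z powr p) \<le> norm (norm (J z) + norm (J z * norm z ^ n))"
      by (simp add: abs_mult distrib_left)
  qed
qed (use J in measurable)

lemma nonlocal_J_Liminf_ge_uniform:
  fixes \<Omega> :: "'a::euclidean_space set" and J :: "'a \<Rightarrow> real"
  assumes \<alpha>: "real DIM('a) - 1 \<le> \<alpha>" "\<alpha> \<le> real DIM('a)"
    and \<Omega>: "\<Omega> \<in> sets lebesgue" "bounded \<Omega>"
    and lower: "ereal M2 \<le> lower_minkowski \<alpha> (frontier \<Omega>)" and "0 < M2"
    and density: "\<forall>x\<in>frontier \<Omega>. \<forall>r\<in>{0<..<1}.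
      min (measure lebesgue (ball x r \<inter> \<Omega>)) (measure lebesgue (ball x r \<inter> (- \<Omega>))) \<ge> D * r ^ DIM('a)"
    and "0 < D" and J: "\<forall>z. J z \<ge> 0" "integrable lebesgue J"
    and J_ge: "\<forall>z. norm z \<le> aJ \<longrightarrow> J z \<ge> cJ" and "0 < cJ" "0 < aJ"
  shows "ereal (cJ * D * (aJ / 2) ^ DIM('a) * min 1 (aJ / 2) / 2 * M2)
    \<le> Liminf (at_right 0) (\<lambda>t. ereal (nonlocal_J J \<Omega> t / t powr (2 * real DIM('a) - \<alpha>)))"
proof -
  define K where "K = cJ * D * (aJ / 2) ^ DIM('a) * (aJ / 2) powr (real DIM('a) - \<alpha>) / 2"
  \<comment> \<open>\<open>n - \<alpha> \<le> 1\<close> makes the constant independent of \<open>\<alpha>\<close>\<close>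
  have "min 1 (aJ / 2) \<le> (aJ / 2) powr (real DIM('a) - \<alpha>)"
    using \<alpha> \<open>0 < aJ\<close> by (intro min_one_le_powr) auto
  then have "cJ * D * (aJ / 2) ^ DIM('a) * min 1 (aJ / 2) / 2 * M2 \<le> K * M2"
    using \<open>0 < cJ\<close> \<open>0 < D\<close> \<open>0 < aJ\<close> \<open>0 < M2\<close> by (simp add: K_def)
  then have "ereal (cJ * D * (aJ / 2) ^ DIM('a) * min 1 (aJ / 2) / 2 * M2) \<le> ereal K * ereal M2"
    by simp
  also have "\<dots> \<le> ereal K * lower_minkowski \<alpha> (frontier \<Omega>)"
    using \<open>0 < cJ\<close> \<open>0 < D\<close> \<open>0 < aJ\<close> by (intro ereal_mult_left_mono lower) (simp add: K_def)
  also have "\<dots> \<le> Liminf (at_right 0) (\<lambda>t. ereal (nonlocal_J J \<Omega> t / t powr (2 * real DIM('a) - \<alpha>)))"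
    unfolding K_def using J J_ge \<open>0 < cJ\<close> \<open>0 < D\<close> \<open>0 < aJ\<close>
    by (intro nonlocal_J_Liminf_ge[OF \<Omega> density]) auto
  finally show ?thesis .
qed

lemma nonlocal_J_Limsup_le_uniform:
  fixes \<Omega> :: "'a::euclidean_space set" and J :: "'a \<Rightarrow> real"
  assumes \<alpha>: "real DIM('a) - 1 \<le> \<alpha>" "\<alpha> \<le> real DIM('a)"
    and \<Omega>: "\<Omega> \<in> sets lebesgue" "bounded \<Omega>"
    and upper: "upper_minkowski \<alpha> (frontier \<Omega>) \<le> ereal M1" and "0 < M1"
    and J: "\<forall>z. J z \<ge> 0" "integrable lebesgue J" "integrable lebesgue (\<lambda>z. J z * norm z ^ DIM('a))"
    and CJ: "\<forall>\<gamma>\<in>{0..real DIM('a)}. (LINT z|lebesgue. J z * norm z powr \<gamma>) \<le> CJ"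
  shows "Limsup (at_right 0) (\<lambda>t. ereal (nonlocal_J J \<Omega> t / t powr (2 * real DIM('a) - \<alpha>)))
    \<le> ereal (2 ^ DIM('a) * CJ * M1)"
proof -
  define \<gamma> where "\<gamma> = real DIM('a) - \<alpha>"
  define G where "G = (LINT z|lebesgue. J z * norm z powr \<gamma>)"
  have "1 \<le> real DIM('a)"
    using DIM_positive[where 'a = 'a] by linarith
  then have \<gamma>: "0 \<le> \<gamma>" "\<gamma> \<le> real DIM('a)"
    using \<alpha> unfolding \<gamma>_def by linarith+
  have J_moment: "integrable lebesgue (\<lambda>z. J z * norm z powr \<gamma>)"
    using J \<gamma> by (intro integrable_mult_norm_powr) auto
  have "Limsup (at_right 0) (\<lambda>t. ereal (nonlocal_J J \<Omega> t / t powr (2 * real DIM('a) - \<alpha>)))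
      \<le> ereal (M1 * 2 powr \<gamma> * G)"
    unfolding G_def \<gamma>_def
    by (rule nonlocal_J_Limsup_le[OF \<Omega> J(2) J(1)[rule_format] J_moment[unfolded \<gamma>_def] \<alpha>(2) upper])
  also have "M1 * 2 powr \<gamma> * G \<le> M1 * 2 ^ DIM('a) * CJ"
  proof (intro mult_mono mult_left_mono)
    show "2 powr \<gamma> \<le> 2 ^ DIM('a)"
      using \<gamma> powr_mono[of \<gamma> "real DIM('a)" 2] by (simp add: powr_realpow)
    show "G \<le> CJ" "0 \<le> G"
      using CJ \<gamma> J(1) by (auto simp: G_def)
  qed (use \<open>0 < M1\<close> in auto)
  finally show ?thesis
    by (simp add: mult_ac)
qed

theorem theorem1p1:
  fixes dummy :: "'a::euclidean_space"
  shows "\<exists>(O1 :: real \<Rightarrow> real) (O2 :: real \<Rightarrow> real \<Rightarrow> real \<Rightarrow> real).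
    (\<forall>a c D. a > 0 \<longrightarrow> c > 0 \<longrightarrow> D > 0 \<longrightarrow> O2 a c D > 0) \<and>
    (\<forall>(\<Omega> :: 'a set) (\<alpha> :: real) (M1 :: real) (M2 :: real) (D :: real)
        (J :: 'a \<Rightarrow> real) (CJ :: real) (cJ :: real) (aJ :: real).
      real DIM('a) - 1 \<le> \<alpha> \<and> \<alpha> \<le> real DIM('a) \<and>
      \<Omega> \<in> sets lebesgue \<and> bounded \<Omega> \<and> measure lebesgue \<Omega> > 0 \<and>
      M1 > 0 \<and> M2 > 0 \<and>
      ereal M2 \<le> lower_minkowski \<alpha> (frontier \<Omega>) \<and>
      lower_minkowski \<alpha> (frontier \<Omega>) \<le> upper_minkowski \<alpha> (frontier \<Omega>) \<and>
      upper_minkowski \<alpha> (frontier \<Omega>) \<le> ereal M1 \<and>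
      D > 0 \<and>
      (\<forall>x\<in>frontier \<Omega>. \<forall>t\<in>{0<..<1}.
         min (measure lebesgue (ball x t \<inter> \<Omega>)) (measure lebesgue (ball x t \<inter> (- \<Omega>)))
           \<ge> D * t ^ DIM('a)) \<and>
      (\<forall>z. J z \<ge> 0) \<and> integrable lebesgue J \<and>
      integrable lebesgue (\<lambda>z. J z * norm z ^ DIM('a)) \<and>
      CJ > 0 \<and>
      (\<forall>\<gamma>\<in>{0..real DIM('a)}. (LINT z|lebesgue. J z * norm z powr \<gamma>) \<le> CJ) \<and>
      cJ > 0 \<and> aJ > 0 \<and> (\<forall>z. norm z \<le> aJ \<longrightarrow> J z \<ge> cJ)
      \<longrightarrow>
      0 < ereal (O2 aJ cJ D * M2) \<and>
      ereal (O2 aJ cJ D * M2) \<le>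
        Liminf (at_right 0) (\<lambda>t. ereal (nonlocal_J J \<Omega> t / t powr (2 * real DIM('a) - \<alpha>))) \<and>
      Liminf (at_right 0) (\<lambda>t. ereal (nonlocal_J J \<Omega> t / t powr (2 * real DIM('a) - \<alpha>))) \<le>
        Limsup (at_right 0) (\<lambda>t. ereal (nonlocal_J J \<Omega> t / t powr (2 * real DIM('a) - \<alpha>))) \<and>
      Limsup (at_right 0) (\<lambda>t. ereal (nonlocal_J J \<Omega> t / t powr (2 * real DIM('a) - \<alpha>))) \<le>
        ereal (O1 CJ * M1) \<and>
      ereal (O1 CJ * M1) < \<infinity>)"
proof (intro exI[of _ "\<lambda>CJ::real. 2 ^ DIM('a) * CJ"]
    exI[of _ "\<lambda>a c D::real. c * D * (a / 2) ^ DIM('a) * min 1 (a / 2) / 2"] conjI allI impI; (elim conjE)?)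
qed (blast intro: nonlocal_J_Liminf_ge_uniform nonlocal_J_Limsup_le_uniform | simp add: Liminf_le_Limsup)+

end
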